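(* Let $G$ be a threshold graph with an odd number of vertices. If $h(\mathrm{seq}(G))=0$, then $G$ has a near-perfect matching, i.e., a matching covering all vertices but one.
   Context: A threshold graph on $n\ge1$ vertices is built from a base vertex $v_0$ by successively adding $v_1,\dots,v_{n-1}$, each either isolated (adjacent to no earlier vertex) or dominating (adjacent to all earlier vertices); its creation sequence $\mathrm{seq}(G)=s_1\cdots s_{n-1}$ has $s_i=1$ if $v_i$ is dominating and $s_i=0$ otherwise. For a binary string $s=s_1\cdots s_m$ and $0\le k\le m$, the $k$-th tail is $s_{m-k+1}\cdots s_m$ (empty for $k=0$); $z_k(s)$, $u_k(s)$ are the numbers of zeros and ones in it, and $h(s)=\max_{0\le k\le m}\{z_k(s)-u_k(s)\}$. *)

theory Defs
  imports Main
begin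

text \<open>A graph is given by a vertex set V and an adjacency relation E.
  threshold_seq V E s: the graph (V,E) is a threshold graph built from v_0 by adding
  v_1,...,v_m (m = length s), where v_j is dominating iff s!(j-1) (s_j = 1)
  and isolated otherwise; so s is its creation sequence.\<close>
definition threshold_seq :: "'a set \<Rightarrow> ('a \<Rightarrow> 'a \<Rightarrow> bool) \<Rightarrow> bool list \<Rightarrow> bool" where
  "threshold_seq V E s \<longleftrightarrow>
     (\<exists>v. bij_betw v {..length s} V \<and>
        (\<forall>x. \<not> E x x) \<and>
        (\<forall>i j. i < j \<and> j \<le> length s \<longrightarrow>
           (E (v i) (v j) \<longleftrightarrow> s ! (j - 1)) \<and> (E (v j) (v i) \<longleftrightarrow> s ! (j - 1))))"

definition tail_seq :: "nat \<Rightarrow> bool list \<Rightarrow> bool list" where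
  "tail_seq k s = drop (length s - k) s"

definition zeros :: "nat \<Rightarrow> bool list \<Rightarrow> nat" where
  "zeros k s = length (filter (\<lambda>b. \<not> b) (tail_seq k s))"

definition ones :: "nat \<Rightarrow> bool list \<Rightarrow> nat" where
  "ones k s = length (filter (\<lambda>b. b) (tail_seq k s))"

definition hval :: "bool list \<Rightarrow> int" where
  "hval s = Max ((\<lambda>k. int (zeros k s) - int (ones k s)) ` {0..length s})"

definition is_matching :: "'a set \<Rightarrow> ('a \<Rightarrow> 'a \<Rightarrow> bool) \<Rightarrow> 'a set set \<Rightarrow> bool" where
  "is_matching V E M \<longleftrightarrow>
     (\<forall>e\<in>M. \<exists>x y. e = {x, y} \<and> x \<noteq> y \<and> x \<in> V \<and> y \<in> V \<and> E x y) \<and>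
     (\<forall>e\<in>M. \<forall>e'\<in>M. e \<noteq> e' \<longrightarrow> e \<inter> e' = {})"

definition near_perfect_matching :: "'a set \<Rightarrow> ('a \<Rightarrow> 'a \<Rightarrow> bool) \<Rightarrow> 'a set set \<Rightarrow> bool" where
  "near_perfect_matching V E M \<longleftrightarrow> is_matching V E M \<and> card (V - \<Union>M) = 1"

end

theory Submission
  imports Defs
begin

text \<open>Reading the creation sequence from the
  front, one builds a matching whose unmatched vertices are v_0 together with dominating vertices
  only, and whose number of unmatched vertices is 1 + #ones - #zeros: an isolated vertex is matched
  with an unmatched dominating vertex, which exists because the ballot condition h(s) = 0 says that
  every tail has at least as many ones as zeros. Any two unmatched vertices are adjacent, since the
  later one is dominating, so the unmatched vertices form a clique and can be paired off until a
  single one remains, the number of vertices being odd.\<close>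

lemma is_matching_Union_subset:
  assumes "is_matching V A M" shows "\<Union>M \<subseteq> V"
proof
  fix x assume "x \<in> \<Union>M"
  then obtain e where "e \<in> M" "x \<in> e" by blast
  then show "x \<in> V" using assms unfolding is_matching_def by auto
qed

lemma is_matching_insert:
  assumes M: "is_matching V A M" and "x \<in> V" "y \<in> V" "x \<noteq> y" "A x y"
    and free: "x \<notin> \<Union>M" "y \<notin> \<Union>M"
  shows "is_matching V A (insert {x, y} M)"
  unfolding is_matching_def
proof (intro conjI ballI impI)
  fix e assume "e \<in> insert {x, y} M"
  then show "\<exists>a b. e = {a, b} \<and> a \<noteq> b \<and> a \<in> V \<and> b \<in> V \<and> A a b"
    using M assms(2-5) unfolding is_matching_def by auto
next
  fix e e' assume "e \<in> insert {x, y} M" "e' \<in> insert {x, y} M" "e \<noteq> e'"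
  moreover have "{x, y} \<inter> d = {}" if "d \<in> M" for d using free that by blast
  ultimately show "e \<inter> e' = {}"
    using M unfolding is_matching_def by (metis Int_commute insertE)
qed

lemma is_matching_image:
  assumes M: "is_matching V A M" and inj: "inj_on f V" and "f ` V \<subseteq> W"
    and edge: "\<And>x y. x \<in> V \<Longrightarrow> y \<in> V \<Longrightarrow> A x y \<Longrightarrow> B (f x) (f y)"
  shows "is_matching W B ((`) f ` M)"
  unfolding is_matching_def
proof (intro conjI ballI impI)
  fix e assume "e \<in> (`) f ` M"
  then obtain x y where "e = {f x, f y}" "x \<noteq> y" "x \<in> V" "y \<in> V" "A x y"
    using M unfolding is_matching_def by force
  then show "\<exists>x y. e = {x, y} \<and> x \<noteq> y \<and> x \<in> W \<and> y \<in> W \<and> B x y"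
    using inj \<open>f ` V \<subseteq> W\<close> edge by (metis image_subset_iff inj_on_contraD)
next
  fix e e' assume "e \<in> (`) f ` M" "e' \<in> (`) f ` M" "e \<noteq> e'"
  then obtain e0 e0' where e: "e0 \<in> M" "e0' \<in> M" "e = f ` e0" "e' = f ` e0'" "e0 \<noteq> e0'"
    by auto
  then have "e0 \<inter> e0' = {}" "e0 \<subseteq> V" "e0' \<subseteq> V"
    using M is_matching_Union_subset[OF M] unfolding is_matching_def by auto
  then show "e \<inter> e' = {}"
    using e inj_on_image_Int[OF inj] by (metis image_empty)
qed

lemma near_perfect_matching_image:
  assumes M: "near_perfect_matching V A M" and f: "bij_betw f V W"
    and edge: "\<And>x y. x \<in> V \<Longrightarrow> y \<in> V \<Longrightarrow> A x y \<Longrightarrow> B (f x) (f y)"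
  shows "near_perfect_matching W B ((`) f ` M)"
proof -
  have inj: "inj_on f V" and W: "W = f ` V" using f by (auto simp: bij_betw_def)
  have sub: "\<Union>M \<subseteq> V" using M is_matching_Union_subset unfolding near_perfect_matching_def by blast
  have "W - \<Union>((`) f ` M) = f ` (V - \<Union>M)"
    using inj_on_image_set_diff[OF inj _ sub] W by auto
  then have "card (W - \<Union>((`) f ` M)) = card (V - \<Union>M)"
    using card_image inj_on_subset[OF inj] by (metis Diff_subset)
  moreover have "is_matching W B ((`) f ` M)"
    using is_matching_image[of V A M f W B] M inj W edge
    unfolding near_perfect_matching_def by blast
  ultimately show ?thesis
    using M unfolding near_perfect_matching_def by simp
qed

lemma is_matching_extend_clique:
  assumes "finite U" "is_matching V A M" "U \<subseteq> V" "U \<inter> \<Union>M = {}"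
    and "\<And>x y. x \<in> U \<Longrightarrow> y \<in> U \<Longrightarrow> x \<noteq> y \<Longrightarrow> A x y"
  shows "\<exists>M'. is_matching V A M' \<and> \<Union>M \<subseteq> \<Union>M' \<and> card (U - \<Union>M') = card U mod 2"
  using assms
proof (induction "card U" arbitrary: U M rule: less_induct)
  case less
  show ?case
  proof (cases "card U \<le> 1")
    case True
    then show ?thesis using less.prems by (intro exI[of _ M]) (auto simp: Diff_triv)
  next
    case False
    then obtain x y where xy: "x \<in> U" "y \<in> U" "x \<noteq> y"
      using card_le_Suc0_iff_eq[OF \<open>finite U\<close>] by auto
    let ?U = "U - {x, y}" and ?M = "insert {x, y} M"
    have card: "card U = card ?U + 2"
      using xy \<open>finite U\<close> False by (simp add: card_Diff_subset)
    have "is_matching V A ?M"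
      using less.prems xy by (intro is_matching_insert) auto
    moreover have "?U \<inter> \<Union>?M = {}" "?U \<subseteq> V" using less.prems by auto
    ultimately obtain M' where M': "is_matching V A M'" "\<Union>?M \<subseteq> \<Union>M'"
      "card (?U - \<Union>M') = card ?U mod 2"
      using less.hyps[of ?U ?M] less.prems card by auto
    moreover have "U - \<Union>M' = ?U - \<Union>M'" using M'(2) by auto
    ultimately show ?thesis using card by auto
  qed
qed

definition threshold_adj :: "bool list \<Rightarrow> nat \<Rightarrow> nat \<Rightarrow> bool" where
  "threshold_adj s i j \<longleftrightarrow>
     (i < j \<and> j \<le> length s \<and> s ! (j - 1)) \<or> (j < i \<and> i \<le> length s \<and> s ! (i - 1))"

lemma threshold_adj_Cons_Suc: "threshold_adj (b # t) (Suc i) (Suc j) = threshold_adj t i j"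
  unfolding threshold_adj_def by (auto simp: nth_Cons split: nat.splits)

lemma threshold_seq_relabel:
  assumes "threshold_seq V E s"
  obtains v where "bij_betw v {..length s} V"
    "\<And>i j. i \<le> length s \<Longrightarrow> j \<le> length s \<Longrightarrow> threshold_adj s i j \<Longrightarrow> E (v i) (v j)"
proof -
  obtain v where "bij_betw v {..length s} V"
    "\<forall>i j. i < j \<and> j \<le> length s \<longrightarrow>
       (E (v i) (v j) \<longleftrightarrow> s ! (j - 1)) \<and> (E (v j) (v i) \<longleftrightarrow> s ! (j - 1))"
    using assms unfolding threshold_seq_def by blast
  then show thesis by (intro that) (auto simp: threshold_adj_def)
qed

definition zero_count :: "bool list \<Rightarrow> nat" where
  "zero_count t = length (filter (\<lambda>b. \<not> b) t)"

definition one_count :: "bool list \<Rightarrow> nat" where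
  "one_count t = length (filter (\<lambda>b. b) t)"

definition ballot :: "bool list \<Rightarrow> bool" where
  "ballot s \<longleftrightarrow> (\<forall>k\<le>length s. zero_count (drop k s) \<le> one_count (drop k s))"

lemma ballot_ConsD: "ballot (b # t) \<Longrightarrow> ballot t \<and> zero_count (b # t) \<le> one_count (b # t)"
  unfolding ballot_def by (metis drop0 drop_Suc_Cons le0 length_Cons Suc_le_mono)

lemma ballot_if_hval_zero:
  assumes "hval s = 0" shows "ballot s"
  unfolding ballot_def
proof (intro allI impI)
  fix k assume k: "k \<le> length s"
  have "int (zeros (length s - k) s) - int (ones (length s - k) s) \<le> hval s"
    unfolding hval_def by (rule Max_ge) auto
  then show "zero_count (drop k s) \<le> one_count (drop k s)"
    using assms k by (simp add: zeros_def ones_def tail_seq_def zero_count_def one_count_def)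
qed

definition greedy_matching :: "bool list \<Rightarrow> nat set set \<Rightarrow> bool" where
  "greedy_matching t M \<longleftrightarrow> is_matching {..length t} (threshold_adj t) M \<and> 0 \<notin> \<Union>M \<and>
    (\<forall>u\<in>{..length t} - \<Union>M. 0 < u \<longrightarrow> t ! (u - 1)) \<and>
    card ({..length t} - \<Union>M) + zero_count t = 1 + one_count t"

lemma is_matching_threshold_adj_Cons:
  assumes "is_matching {..length t} (threshold_adj t) M"
  shows "is_matching {..Suc (length t)} (threshold_adj (b # t)) ((`) Suc ` M)"
  using assms by (rule is_matching_image) (auto simp: threshold_adj_Cons_Suc)

lemma atMost_Suc_diff_Union_Suc_image:
  "{..Suc n} - \<Union>((`) Suc ` M) = insert 0 (Suc ` ({..n} - \<Union>M))"
proof (rule set_eqI)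
  show "u \<in> {..Suc n} - \<Union>((`) Suc ` M) \<longleftrightarrow> u \<in> insert 0 (Suc ` ({..n} - \<Union>M))" for u
    by (cases u) auto
qed

lemma greedy_matching_Cons_True:
  assumes "greedy_matching t M"
  shows "greedy_matching (True # t) ((`) Suc ` M)"
proof -
  define U where "U = {..length t} - \<Union>M"
  have "card (insert 0 (Suc ` U)) = Suc (card U)"
    by (simp add: U_def card_image)
  moreover have "0 < u \<longrightarrow> (True # t) ! (u - 1)" if "u \<in> insert 0 (Suc ` U)" for u
    using that assms by (cases "u - 1") (auto simp: U_def greedy_matching_def)
  ultimately show ?thesis
    using assms is_matching_threshold_adj_Cons atMost_Suc_diff_Union_Suc_image[of "length t" M]
    by (auto simp: greedy_matching_def U_def zero_count_def one_count_def)
qed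

text \<open>A new isolated vertex is matched with an unmatched dominating vertex w; one exists because
  the unmatched vertices outnumber v_0 alone.\<close>

lemma greedy_matching_Cons_False:
  assumes M: "greedy_matching t M" and "zero_count t < one_count t"
  shows "\<exists>M'. greedy_matching (False # t) M'"
proof -
  define U where "U = {..length t} - \<Union>M"
  have "finite U" "0 \<in> U" using M by (auto simp: U_def greedy_matching_def)
  have "card (U - {0}) \<noteq> 0"
    using M assms(2) \<open>finite U\<close> \<open>0 \<in> U\<close> by (simp add: U_def greedy_matching_def)
  then obtain w where w: "w \<in> U" "w \<noteq> 0"
    by (metis card.empty Diff_eq_empty_iff insertCI subsetI)
  then have wt: "t ! (w - 1)" "w \<le> length t" "w \<notin> \<Union>M"
    using M by (auto simp: U_def greedy_matching_def)
  let ?M = "insert {1, Suc w} ((`) Suc ` M)"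
  have "threshold_adj (False # t) 1 (Suc w)"
    using wt w(2) by (auto simp: threshold_adj_def nth_Cons split: nat.split)
  then have "is_matching {..Suc (length t)} (threshold_adj (False # t)) ?M"
    using M wt w(2) is_matching_threshold_adj_Cons
    by (intro is_matching_insert) (auto simp: greedy_matching_def)
  moreover have "{..Suc (length t)} - \<Union>?M = insert 0 (Suc ` U) - {1, Suc w}"
    using atMost_Suc_diff_Union_Suc_image[of "length t" M] by (auto simp: U_def)
  moreover have "insert 0 (Suc ` U) - {1, Suc w} = insert 0 (Suc ` (U - {0, w}))" by auto
  moreover have "card (insert 0 (Suc ` (U - {0, w}))) + 1 = card U"
    using \<open>finite U\<close> \<open>0 \<in> U\<close> w card_mono[of U "{0, w}"]
    by (simp add: card_image card_Diff_subset)
  moreover have "0 < u \<longrightarrow> (False # t) ! (u - 1)" if "u \<in> insert 0 (Suc ` (U - {0, w}))" for u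
    using that M by (auto simp: U_def greedy_matching_def)
  ultimately have "greedy_matching (False # t) ?M"
    using M by (auto simp: greedy_matching_def U_def zero_count_def one_count_def)
  then show ?thesis ..
qed

lemma ballot_greedy_matching: "ballot t \<Longrightarrow> \<exists>M. greedy_matching t M"
proof (induction t)
  case Nil
  have "greedy_matching [] {}"
    by (auto simp: greedy_matching_def is_matching_def zero_count_def one_count_def)
  then show ?case ..
next
  case (Cons b t)
  then obtain M where M: "greedy_matching t M" using ballot_ConsD by blast
  show ?case
  proof (cases b)
    case True
    then show ?thesis using greedy_matching_Cons_True[OF M] by auto
  next
    case False
    have "zero_count (b # t) \<le> one_count (b # t)" using ballot_ConsD[OF Cons.prems] by blast
    then have "zero_count t < one_count t" using False by (simp add: zero_count_def one_count_def)
    then show ?thesis using greedy_matching_Cons_False[OF M] False by auto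
  qed
qed

lemma threshold_adj_if_later_dominating:
  assumes "i < j" "j \<le> length s" "s ! (j - 1)"
  shows "threshold_adj s i j" "threshold_adj s j i"
  using assms by (auto simp: threshold_adj_def)

lemma ballot_near_perfect_matching:
  assumes "ballot s" "even (length s)"
  shows "\<exists>M. near_perfect_matching {..length s} (threshold_adj s) M"
proof -
  obtain M where M: "is_matching {..length s} (threshold_adj s) M" "0 \<notin> \<Union>M"
    "\<forall>u\<in>{..length s} - \<Union>M. 0 < u \<longrightarrow> s ! (u - 1)"
    "card ({..length s} - \<Union>M) + zero_count s = 1 + one_count s"
    using ballot_greedy_matching[OF assms(1)] unfolding greedy_matching_def by blast
  define U where "U = {..length s} - \<Union>M"
  have clique: "threshold_adj s x y" if "x \<in> U" "y \<in> U" "x \<noteq> y" for x y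
  proof (cases "x < y")
    case True
    then show ?thesis using that M(3) threshold_adj_if_later_dominating(1) by (simp add: U_def)
  next
    case False
    then have "y < x" using \<open>x \<noteq> y\<close> by simp
    then show ?thesis using that M(3) threshold_adj_if_later_dominating(2) by (simp add: U_def)
  qed
  obtain M' where M': "is_matching {..length s} (threshold_adj s) M'" "\<Union>M \<subseteq> \<Union>M'"
    "card (U - \<Union>M') = card U mod 2"
  proof -
    have "finite U" "U \<subseteq> {..length s}" "U \<inter> \<Union>M = {}" by (auto simp: U_def)
    from is_matching_extend_clique[OF this(1) M(1) this(2,3) clique] that show thesis by blast
  qed
  have "length s = zero_count s + one_count s"
    using sum_length_filter_compl[of "\<lambda>b. b" s] by (simp add: zero_count_def one_count_def)
  then have "card U + 2 * zero_count s = Suc (length s)" using M(4) by (simp add: U_def)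
  then have "card U mod 2 = 1" using assms(2) by presburger
  moreover have "{..length s} - \<Union>M' = U - \<Union>M'" using M'(2) by (auto simp: U_def)
  ultimately show ?thesis
    using M' unfolding near_perfect_matching_def by auto
qed

theorem mainTheorem5:
  fixes V :: "'a set" and E :: "'a \<Rightarrow> 'a \<Rightarrow> bool" and s :: "bool list"
  assumes "threshold_seq V E s"
    and "odd (card V)"
    and "hval s = 0"
  shows "\<exists>M. near_perfect_matching V E M"
proof -
  obtain v where v: "bij_betw v {..length s} V"
    "\<And>i j. i \<le> length s \<Longrightarrow> j \<le> length s \<Longrightarrow> threshold_adj s i j \<Longrightarrow> E (v i) (v j)"
    using threshold_seq_relabel[OF assms(1)] by blast
  have "card V = Suc (length s)" using bij_betw_same_card[OF v(1)] by simp
  then have "even (length s)" using assms(2) by simp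
  then obtain M where "near_perfect_matching {..length s} (threshold_adj s) M"
    using ballot_near_perfect_matching[OF ballot_if_hval_zero[OF assms(3)]] by blast
  then have "near_perfect_matching V E ((`) v ` M)"
    by (rule near_perfect_matching_image[OF _ v(1)]) (auto intro: v(2))
  then show ?thesis ..
qed

end
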